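(* With $F_n$ as defined in the context, $$\int_{1+(\log n)^{-1}}^{\infty}F_n(w)\,dw=O(n\log\log n)\qquad(n\to\infty).$$
   Context: For $w>0$ and integer $n\ge1$ let $a_n(w)=\sum_{j=0}^n w^j$, $b_n(w)=\sum_{j=1}^n jw^j$, $c_n(w)=\sum_{j=0}^n j^2w^j$, and $$F_n(w)=\frac{1}{2\sqrt{w}}\sqrt{\frac{c_n(w)}{a_n(w)}}\sqrt{\frac{a_n(w)c_n(w)-b_n(w)^2}{w\,a_n(w)^2}}.$$ $\log$ is the natural logarithm. *)

theory Defs
  imports "HOL-Analysis.Analysis" "HOL-Library.Landau_Symbols"
begin

definition a_n :: "nat \<Rightarrow> real \<Rightarrow> real" where
  "a_n n w = (\<Sum>j=0..n. w ^ j)"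

definition b_n :: "nat \<Rightarrow> real \<Rightarrow> real" where
  "b_n n w = (\<Sum>j=1..n. real j * w ^ j)"

definition c_n :: "nat \<Rightarrow> real \<Rightarrow> real" where
  "c_n n w = (\<Sum>j=0..n. (real j)^2 * w ^ j)"

definition F_n :: "nat \<Rightarrow> real \<Rightarrow> real" where
  "F_n n w = 1 / (2 * sqrt w) * sqrt (c_n n w / a_n n w)
     * sqrt ((a_n n w * c_n n w - (b_n n w)^2) / (w * (a_n n w)^2))"

end

theory Submission
  imports Defs "HOL-Real_Asymp.Real_Asymp"
begin

text \<open>
  With weights \<open>w^j / a_n n w\<close> on \<open>{0..n}\<close>, the factor \<open>c_n / a_n\<close> of \<open>F_n\<close> is the second
  moment of \<open>j\<close>, at most \<open>n\<^sup>2\<close>, and \<open>(a_n c_n - b_n\<^sup>2) / a_n\<^sup>2\<close> is its variance. The variance is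
  at most the second moment about \<open>n\<close>, and multiplying the sums \<open>\<Sum>(n - j)\<^sup>k w^j\<close> by \<open>w - 1\<close>
  telescopes them, which bounds that moment by \<open>(w + 1) / (w - 1)\<^sup>2\<close> for \<open>w > 1\<close>.
  Hence \<open>F_n n w \<le> n / (\<surd>w (w - 1))\<close>, whose integral over \<open>[c, \<infinity>)\<close> is
  \<open>n ln ((\<surd>c + 1) / (\<surd>c - 1)) \<le> n (ln 9 - ln (c - 1))\<close>; at \<open>c = 1 + 1 / ln n\<close> this is
  \<open>n (ln 9 + ln (ln n))\<close>.
\<close>

lemma b_n_eq_sum_from_0: "b_n n w = (\<Sum>j=0..n. real j * w ^ j)"
  unfolding b_n_def by (simp add: sum.atLeast_Suc_atMost atLeastSucAtMost_greaterThanAtMost)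

lemma a_n_pos: "w > 0 \<Longrightarrow> a_n n w > 0"
  unfolding a_n_def by (simp add: sum.atLeast_Suc_atMost add_pos_nonneg sum_nonneg)

lemma c_n_nonneg: "w \<ge> 0 \<Longrightarrow> c_n n w \<ge> 0"
  unfolding c_n_def by (intro sum_nonneg) auto

lemma c_n_le: "w \<ge> 0 \<Longrightarrow> c_n n w \<le> (real n)^2 * a_n n w"
  unfolding c_n_def a_n_def sum_distrib_left
  by (intro sum_mono mult_right_mono power_mono) auto

lemma a_n_Suc: "a_n (Suc n) w = a_n n w + w ^ Suc n"
  by (simp add: a_n_def)

lemma a_n_geometric: "(w - 1) * a_n n w = w ^ Suc n - 1"
  by (induction n) (auto simp: a_n_Suc algebra_simps a_n_def)

lemma a_n_c_n_minus_b_n_sq_eq: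
  "2 * (a_n n w * c_n n w - (b_n n w)^2) = (\<Sum>i=0..n. \<Sum>j=0..n. (real i - real j)^2 * (w^i * w^j))"
proof -
  have "(\<Sum>i=0..n. \<Sum>j=0..n. (real i - real j)^2 * (w^i * w^j))
      = (\<Sum>i=0..n. \<Sum>j=0..n. (real i)^2 * w^i * w^j + w^i * ((real j)^2 * w^j)
           - 2 * ((real i * w^i) * (real j * w^j)))"
    by (intro sum.cong refl) (simp add: power2_eq_square algebra_simps)
  also have "\<dots> = c_n n w * a_n n w + a_n n w * c_n n w - 2 * (b_n n w * b_n n w)"
    unfolding a_n_def c_n_def b_n_eq_sum_from_0 sum_product
    by (simp add: sum.distrib sum_subtractf sum_distrib_left)
  finally show ?thesis by (simp add: power2_eq_square algebra_simps)
qed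

lemma a_n_c_n_minus_b_n_sq_nonneg:
  assumes "w \<ge> 0" shows "a_n n w * c_n n w - (b_n n w)^2 \<ge> 0"
proof -
  have "0 \<le> (\<Sum>i=0..n. \<Sum>j=0..n. (real i - real j)^2 * (w^i * w^j))"
    using assms by (intro sum_nonneg) auto
  then show ?thesis using a_n_c_n_minus_b_n_sq_eq[of n w] by simp
qed

definition gap_sum :: "nat \<Rightarrow> real \<Rightarrow> real" where
  "gap_sum n w = (\<Sum>j=0..n. (real n - real j) * w ^ j)"

definition gap_sq_sum :: "nat \<Rightarrow> real \<Rightarrow> real" where
  "gap_sq_sum n w = (\<Sum>j=0..n. (real n - real j)^2 * w ^ j)"

lemma gap_sum_Suc: "gap_sum (Suc n) w = gap_sum n w + a_n n w"
proof -
  have "gap_sum (Suc n) w = (\<Sum>j=0..n. (real n - real j) * w ^ j + w ^ j)"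
    unfolding gap_sum_def by (simp, intro sum.cong) (auto simp: algebra_simps)
  then show ?thesis by (simp add: gap_sum_def a_n_def sum.distrib)
qed

lemma gap_sq_sum_Suc: "gap_sq_sum (Suc n) w = gap_sq_sum n w + 2 * gap_sum n w + a_n n w"
proof -
  have "gap_sq_sum (Suc n) w
      = (\<Sum>j=0..n. (real n - real j)^2 * w ^ j + 2 * ((real n - real j) * w ^ j) + w ^ j)"
    unfolding gap_sq_sum_def by (simp, intro sum.cong) (auto simp: algebra_simps power2_eq_square)
  then show ?thesis
    by (simp add: gap_sum_def gap_sq_sum_def a_n_def sum.distrib sum_distrib_left)
qed

lemma gap_sum_eq: "(w - 1) * gap_sum n w = a_n n w - (real n + 1)"
proof (induction n)
  case (Suc n)
  then show ?case
    using a_n_geometric[of w n] by (simp add: gap_sum_Suc a_n_Suc algebra_simps)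
qed (simp add: gap_sum_def a_n_def)

lemma gap_sq_sum_eq: "(w - 1) * gap_sq_sum n w = 2 * gap_sum n w + a_n n w - (real n + 1)^2"
proof (induction n)
  case (Suc n)
  then show ?case
    using a_n_geometric[of w n] gap_sum_eq[of w n]
    by (simp add: gap_sq_sum_Suc gap_sum_Suc a_n_Suc algebra_simps power2_eq_square)
qed (simp add: gap_sum_def gap_sq_sum_def a_n_def)

lemma gap_sq_sum_le:
  assumes "w > 1" shows "(w - 1)^2 * gap_sq_sum n w \<le> (w + 1) * a_n n w"
proof -
  have "(w - 1)^2 * gap_sq_sum n w = (w - 1) * ((w - 1) * gap_sq_sum n w)"
    by (simp add: power2_eq_square)
  also have "\<dots> = 2 * ((w - 1) * gap_sum n w) + (w - 1) * a_n n w - (w - 1) * (real n + 1)^2"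
    unfolding gap_sq_sum_eq by (simp add: algebra_simps)
  also have "\<dots> \<le> 2 * a_n n w + (w - 1) * a_n n w"
  proof -
    have "0 \<le> (w - 1) * (real n + 1)^2" using assms by simp
    then show ?thesis using gap_sum_eq[of w n] by linarith
  qed
  finally show ?thesis by (simp add: algebra_simps)
qed

lemma gap_sq_sum_expand: "gap_sq_sum n w = (real n)^2 * a_n n w - 2 * real n * b_n n w + c_n n w"
  unfolding gap_sq_sum_def a_n_def c_n_def b_n_eq_sum_from_0 sum_distrib_left
    sum_subtractf[symmetric] sum.distrib[symmetric]
  by (intro sum.cong) (auto simp: power2_eq_square algebra_simps)

lemma a_n_c_n_minus_b_n_sq_le:
  assumes "w > 1" shows "(w - 1)^2 * (a_n n w * c_n n w - (b_n n w)^2) \<le> (w + 1) * (a_n n w)^2"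
proof -
  have "a_n n w * c_n n w - (b_n n w)^2 = a_n n w * gap_sq_sum n w - (real n * a_n n w - b_n n w)^2"
    unfolding gap_sq_sum_expand by (simp add: power2_eq_square algebra_simps)
  then have "a_n n w * c_n n w - (b_n n w)^2 \<le> a_n n w * gap_sq_sum n w"
    by simp
  then have "(w - 1)^2 * (a_n n w * c_n n w - (b_n n w)^2) \<le> a_n n w * ((w - 1)^2 * gap_sq_sum n w)"
    using mult_left_mono[of _ _ "(w - 1)^2"] by (metis mult.left_commute zero_le_power2)
  also have "\<dots> \<le> a_n n w * ((w + 1) * a_n n w)"
    using assms a_n_pos[of w n] gap_sq_sum_le[OF assms] by (intro mult_left_mono) auto
  finally show ?thesis by (simp add: power2_eq_square algebra_simps)
qed

lemma F_n_nonneg: "w > 0 \<Longrightarrow> F_n n w \<ge> 0"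
  unfolding F_n_def
  using a_n_pos[of w n] c_n_nonneg[of w n] a_n_c_n_minus_b_n_sq_nonneg[of w n]
  by (auto intro!: mult_nonneg_nonneg)

lemma F_n_le:
  assumes w: "w > 1" shows "F_n n w \<le> real n / (sqrt w * (w - 1))"
proof -
  define a c V where "a = a_n n w" and "c = c_n n w" and "V = a_n n w * c_n n w - (b_n n w)^2"
  have a: "a > 0" and c: "c \<ge> 0" and V: "V \<ge> 0"
    using w a_n_pos c_n_nonneg a_n_c_n_minus_b_n_sq_nonneg unfolding a_def c_def V_def by auto
  have "c / a \<le> (real n)^2"
    using c_n_le[of w n] a w by (simp add: a_def c_def divide_le_eq)
  then have mean: "sqrt (c / a) \<le> real n"
    using real_sqrt_le_mono by fastforce
  have "(w - 1)^2 * V \<le> (w + 1) * a^2"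
    using a_n_c_n_minus_b_n_sq_le[OF w] unfolding a_def V_def .
  also have "\<dots> \<le> 4 * w * a^2"
    using w by (intro mult_right_mono) auto
  finally have "V / (w * a^2) \<le> (2 / (w - 1))^2"
    using w a by (simp add: power_divide divide_le_eq le_divide_eq mult.commute mult.left_commute)
  then have spread: "sqrt (V / (w * a^2)) \<le> 2 / (w - 1)"
    using w real_sqrt_le_mono by fastforce
  have "F_n n w = 1 / (2 * sqrt w) * sqrt (c / a) * sqrt (V / (w * a^2))"
    unfolding F_n_def a_def c_def V_def ..
  also have "\<dots> \<le> 1 / (2 * sqrt w) * real n * (2 / (w - 1))"
    using mean spread w a c V by (intro mult_mono) auto
  finally show ?thesis using w by simp
qed

lemma continuous_on_F_n: "continuous_on {0<..} (F_n n)"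
  unfolding F_n_def a_n_def b_n_def c_n_def
  by (intro continuous_intros) (auto dest: a_n_pos[of _ n] simp: a_n_def)

lemma has_real_derivative_ln_sqrt_ratio:
  assumes w: "w > 1"
  shows "((\<lambda>w. ln (sqrt w - 1) - ln (sqrt w + 1)) has_real_derivative 1 / (sqrt w * (w - 1))) (at w)"
proof -
  have "sqrt w > 1" using w by simp
  then have s: "sqrt w - 1 > 0" "sqrt w + 1 > 0" by linarith+
  have sqrt': "(sqrt has_real_derivative inverse (sqrt w) / 2) (at w)"
    using w by (intro DERIV_real_sqrt) simp
  have minus: "((\<lambda>w. sqrt w - 1) has_real_derivative inverse (sqrt w) / 2) (at w)"
    using DERIV_diff[OF sqrt' DERIV_const[of 1]] by simp
  have plus: "((\<lambda>w. sqrt w + 1) has_real_derivative inverse (sqrt w) / 2) (at w)"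
    using DERIV_add[OF sqrt' DERIV_const[of 1]] by simp
  have "((\<lambda>w. ln (sqrt w - 1) - ln (sqrt w + 1)) has_real_derivative
      1 / (sqrt w - 1) * (inverse (sqrt w) / 2) - 1 / (sqrt w + 1) * (inverse (sqrt w) / 2)) (at w)"
    by (intro DERIV_diff DERIV_chain2[OF DERIV_ln_divide] minus plus s)
  moreover have "1 / (x - 1) * (inverse x / 2) - 1 / (x + 1) * (inverse x / 2)
      = 1 / (x * ((x - 1) * (x + 1)))" if "x \<noteq> 0" "x - 1 \<noteq> 0" "x + 1 \<noteq> 0" for x :: real
    using that by (simp add: divide_simps)
  moreover have "(sqrt w - 1) * (sqrt w + 1) = w - 1"
    using w by (simp add: algebra_simps)
  ultimately show ?thesis
    using s by (simp add: less_imp_neq[symmetric])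
qed

lemma has_integral_inverse_sqrt_mult:
  assumes c: "c > 1"
  shows "((\<lambda>w. 1 / (sqrt w * (w - 1))) has_integral (ln (sqrt c + 1) - ln (sqrt c - 1))) {c..}"
proof (rule has_integral_to_inf)
  define G where "G = (\<lambda>w::real. ln (sqrt w - 1) - ln (sqrt w + 1))"
  have G: "((\<lambda>w. 1 / (sqrt w * (w - 1))) has_integral (G y - G c)) {c..y}" if "c \<le> y" for y
  proof (rule fundamental_theorem_of_calculus[OF that])
    fix x assume "x \<in> {c..y}"
    then show "(G has_vector_derivative 1 / (sqrt x * (x - 1))) (at x within {c..y})"
      using c has_real_derivative_ln_sqrt_ratio[of x]
      by (auto simp: G_def has_real_derivative_iff_has_vector_derivative
               intro: has_vector_derivative_at_within)
  qed
  then show "(\<lambda>w. 1 / (sqrt w * (w - 1))) integrable_on {c..y}" for y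
    by (cases "c \<le> y") auto
  have "((\<lambda>y. G y - G c) \<longlongrightarrow> 0 - G c) at_top"
    unfolding G_def by (intro tendsto_diff tendsto_const) real_asymp
  moreover have "\<forall>\<^sub>F y in at_top. G y - G c = integral {c..y} (\<lambda>w. 1 / (sqrt w * (w - 1)))"
    by (rule eventually_mono[OF eventually_ge_at_top[of c]]) (simp add: integral_unique[OF G])
  ultimately show "((\<lambda>y. integral {c..y} (\<lambda>w. 1 / (sqrt w * (w - 1))))
      \<longlongrightarrow> ln (sqrt c + 1) - ln (sqrt c - 1)) at_top"
    by (auto simp: G_def intro: Lim_transform_eventually)
qed (use c in auto)

lemma
  assumes c: "c > 1"
  shows F_n_integrable_on_atLeast: "F_n n integrable_on {c..}"
    and integral_F_n_nonneg: "integral {c..} (F_n n) \<ge> 0"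
    and integral_F_n_le: "integral {c..} (F_n n) \<le> real n * (ln (sqrt c + 1) - ln (sqrt c - 1))"
proof -
  let ?g = "\<lambda>w. real n * (1 / (sqrt w * (w - 1)))"
  have g: "(?g has_integral real n * (ln (sqrt c + 1) - ln (sqrt c - 1))) {c..}"
    by (intro has_integral_mult_right has_integral_inverse_sqrt_mult c)
  have dominated: "norm (F_n n w) \<le> ?g w" if "w \<in> {c..}" for w
    using that c F_n_nonneg[of w n] F_n_le[of w n] by auto
  show F: "F_n n integrable_on {c..}"
  proof (rule measurable_bounded_by_integrable_imp_integrable[OF _ _ dominated])
    show "F_n n \<in> borel_measurable (lebesgue_on {c..})"
      using c by (intro continuous_imp_measurable_on_sets_lebesgue
          continuous_on_subset[OF continuous_on_F_n]) auto
  qed (use g in auto)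
  show "integral {c..} (F_n n) \<ge> 0"
    using F c F_n_nonneg[of _ n] by (intro integral_nonneg) auto
  have "integral {c..} (F_n n) \<le> integral {c..} ?g"
    using dominated by (intro integral_le[OF F has_integral_integrable[OF g]]) (force dest: abs_le_D1)
  then show "integral {c..} (F_n n) \<le> real n * (ln (sqrt c + 1) - ln (sqrt c - 1))"
    using g by (simp add: integral_unique)
qed

lemma ln_sqrt_ratio_le:
  assumes "1 < c" "c \<le> 4"
  shows "ln (sqrt c + 1) - ln (sqrt c - 1) \<le> ln 9 - ln (c - 1)"
proof -
  have "1 < sqrt c" "sqrt c \<le> 2"
    using assms real_sqrt_le_mono[of c 4] by auto
  then have s: "0 < sqrt c - 1" "0 < sqrt c + 1" "sqrt c + 1 \<le> 3"
    by linarith+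
  have "(sqrt c - 1) * (sqrt c + 1) = c - 1"
    using assms by (simp add: algebra_simps)
  then have "ln (c - 1) = ln (sqrt c - 1) + ln (sqrt c + 1)"
    using ln_mult[of "sqrt c - 1" "sqrt c + 1"] s by simp
  moreover have "2 * ln (sqrt c + 1) \<le> ln 9"
    using ln_mono[OF s(3,2)] ln_realpow[of 3 2] by simp
  ultimately show ?thesis by simp
qed

lemma integral_F_n_from_log_bound:
  assumes L: "1 \<le> ln (real n)"
  shows "F_n n integrable_on {1 + 1 / ln (real n)..}"
    and "norm (integral {1 + 1 / ln (real n)..} (F_n n)) \<le> norm (real n * (ln 9 + ln (ln (real n))))"
proof -
  define c where "c = 1 + 1 / ln (real n)"
  have "0 < 1 / ln (real n)" "1 / ln (real n) \<le> 1"
    using L by auto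
  then have c: "1 < c" "c \<le> 4"
    unfolding c_def by linarith+
  show "F_n n integrable_on {1 + 1 / ln (real n)..}"
    using F_n_integrable_on_atLeast[OF c(1)] by (simp add: c_def)
  have "integral {c..} (F_n n) \<le> real n * (ln (sqrt c + 1) - ln (sqrt c - 1))"
    by (rule integral_F_n_le[OF c(1)])
  also have "\<dots> \<le> real n * (ln 9 - ln (c - 1))"
    by (intro mult_left_mono ln_sqrt_ratio_le c) simp
  also have "\<dots> = real n * (ln 9 + ln (ln (real n)))"
    using L by (simp add: c_def ln_div)
  finally show "norm (integral {1 + 1 / ln (real n)..} (F_n n)) \<le> norm (real n * (ln 9 + ln (ln (real n))))"
    using integral_F_n_nonneg[OF c(1)] by (simp add: c_def)
qed

theorem proposition3p3:
  shows "(\<forall>\<^sub>F n in at_top. F_n n integrable_on {1 + 1 / ln (real n)..}) \<and>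
    (\<lambda>n. integral {1 + 1 / ln (real n)..} (F_n n)) \<in> O(\<lambda>n. real n * ln (ln (real n)))"
proof
  have large: "\<forall>\<^sub>F n in at_top. 1 \<le> ln (real n)"
    by real_asymp
  then show "\<forall>\<^sub>F n in at_top. F_n n integrable_on {1 + 1 / ln (real n)..}"
    by (rule eventually_mono) (rule integral_F_n_from_log_bound(1))
  have "(\<lambda>n. integral {1 + 1 / ln (real n)..} (F_n n)) \<in> O(\<lambda>n. real n * (ln 9 + ln (ln (real n))))"
    by (intro landau_o.big_mono eventually_mono[OF large] integral_F_n_from_log_bound(2))
  also have "(\<lambda>n. real n * (ln 9 + ln (ln (real n)))) \<in> O(\<lambda>n. real n * ln (ln (real n)))"
    by real_asymp
  finally show "(\<lambda>n. integral {1 + 1 / ln (real n)..} (F_n n)) \<in> O(\<lambda>n. real n * ln (ln (real n)))" .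
qed

end
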